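(* Let $X$ be a finite, connected, vertex-transitive graph with vertex set $V$, $|V|=n$, equipped with the graph (shortest-path) distance $d$, and let $D$ be its diameter. Let $A=\frac{1}{n^2}\sum_{x,y\in V} d(x,y)$ (sum over all ordered pairs, including $x=y$). Then $$\frac{D}{2}\le A\le \Big(1-\frac1n\Big)D.$$ Moreover, if $n\ge 2$ and $\bar A=\frac{1}{n(n-1)}\sum_{x\neq y} d(x,y)$ (sum over ordered pairs of distinct vertices), then $$\frac{D}{2}\cdot\frac{n}{n-1}\le \bar A\le D.$$
   Context: A graph is vertex-transitive if its automorphism group acts transitively on its vertices. *)

theory Defs
  imports Complex_Main
begin

definition simple_graph :: "'a set \<Rightarrow> ('a \<Rightarrow> 'a \<Rightarrow> bool) \<Rightarrow> bool" where
  "simple_graph V E \<longleftrightarrow> finite V \<and> V \<noteq> {} \<and>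
     (\<forall>x y. E x y \<longrightarrow> x \<in> V \<and> y \<in> V) \<and>
     (\<forall>x y. E x y \<longrightarrow> E y x) \<and> (\<forall>x. \<not> E x x)"

definition walk :: "'a set \<Rightarrow> ('a \<Rightarrow> 'a \<Rightarrow> bool) \<Rightarrow> 'a list \<Rightarrow> bool" where
  "walk V E p \<longleftrightarrow> p \<noteq> [] \<and> set p \<subseteq> V \<and> (\<forall>i. Suc i < length p \<longrightarrow> E (p ! i) (p ! Suc i))"

definition connected_graph :: "'a set \<Rightarrow> ('a \<Rightarrow> 'a \<Rightarrow> bool) \<Rightarrow> bool" where
  "connected_graph V E \<longleftrightarrow>
     (\<forall>x\<in>V. \<forall>y\<in>V. \<exists>p. walk V E p \<and> hd p = x \<and> last p = y)"

definition dist_graph :: "'a set \<Rightarrow> ('a \<Rightarrow> 'a \<Rightarrow> bool) \<Rightarrow> 'a \<Rightarrow> 'a \<Rightarrow> nat" where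
  "dist_graph V E x y = (LEAST n. \<exists>p. walk V E p \<and> hd p = x \<and> last p = y \<and> length p = Suc n)"

definition diameter :: "'a set \<Rightarrow> ('a \<Rightarrow> 'a \<Rightarrow> bool) \<Rightarrow> nat" where
  "diameter V E = Max {dist_graph V E x y | x y. x \<in> V \<and> y \<in> V}"

definition graph_automorphism :: "'a set \<Rightarrow> ('a \<Rightarrow> 'a \<Rightarrow> bool) \<Rightarrow> ('a \<Rightarrow> 'a) \<Rightarrow> bool" where
  "graph_automorphism V E f \<longleftrightarrow> bij_betw f V V \<and>
     (\<forall>x\<in>V. \<forall>y\<in>V. E (f x) (f y) \<longleftrightarrow> E x y)"

definition vertex_transitive :: "'a set \<Rightarrow> ('a \<Rightarrow> 'a \<Rightarrow> bool) \<Rightarrow> bool" where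
  "vertex_transitive V E \<longleftrightarrow>
     (\<forall>x\<in>V. \<forall>y\<in>V. \<exists>f. graph_automorphism V E f \<and> f x = y)"

end

theory Submission
  imports Defs
begin

(* Write tr(x) = sum_y d(x,y) for the transmission of a vertex x and
   T = sum_x tr(x) for the total distance, so that A = T/n^2 and, since d(x,x) = 0,
   also Abar = T/(n(n-1)).
   Upper bound: every distance is at most D and d(x,x) = 0, hence tr(x) <= (n-1) D.
   Lower bound: pick u, v with d(u,v) = D.  By the triangle inequality and symmetry,
   D <= d(u,y) + d(v,y) for every y, so n D <= tr(u) + tr(v).
   Vertex-transitivity makes tr constant (automorphisms do not increase distances),
   hence T = n tr(u) and  n^2 D <= 2 T <= 2 n (n-1) D; both claims then follow by
   dividing by n^2 resp. n(n-1). *)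

lemma walk_single: "walk V E [x] \<longleftrightarrow> x \<in> V"
  unfolding walk_def by auto

lemma walk_Cons2: "walk V E (x # y # p) \<longleftrightarrow> x \<in> V \<and> E x y \<and> walk V E (y # p)"
  unfolding walk_def
proof safe
  fix i
  assume h: "\<forall>i. Suc i < length (x # y # p) \<longrightarrow> E ((x # y # p) ! i) ((x # y # p) ! Suc i)"
    and "Suc i < length (y # p)"
  then show "E ((y # p) ! i) ((y # p) ! Suc i)" using h[rule_format, of "Suc i"] by simp
next
  fix i
  assume "E x y" and "\<forall>i. Suc i < length (y # p) \<longrightarrow> E ((y # p) ! i) ((y # p) ! Suc i)"
    and "Suc i < length (x # y # p)"
  then show "E ((x # y # p) ! i) ((x # y # p) ! Suc i)" by (cases i) auto
qed (auto dest: spec[of _ 0])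

lemma walk_append:
  assumes "walk V E p" "walk V E q" "last p = hd q"
  shows "walk V E (p @ tl q)"
  using assms
proof (induction p rule: induct_list012)
  case 1
  then show ?case by (simp add: walk_def)
next
  case (2 a)
  then have "q = a # tl q" by (cases q) (auto simp: walk_def)
  with 2 show ?case by simp
next
  case (3 a b r)
  then have "walk V E ((b # r) @ tl q)" by (simp add: walk_Cons2)
  with 3 show ?case by (simp add: walk_Cons2)
qed

lemma walk_rev:
  assumes "walk V E p" and sym: "\<forall>x y. E x y \<longrightarrow> E y x"
  shows "walk V E (rev p)"
  using assms(1)
proof (induction p rule: induct_list012)
  case (3 a b r)
  have "walk V E (rev (b # r))" using 3 by (simp add: walk_Cons2)
  moreover have "walk V E [b, a]" using 3 sym by (auto simp: walk_Cons2 walk_single walk_def)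
  ultimately have "walk V E (rev (b # r) @ tl [b, a])" by (rule walk_append) simp
  then show ?case by simp
qed simp_all

lemma walk_map:
  assumes "walk V E p" "f ` V \<subseteq> V" "\<forall>x\<in>V. \<forall>y\<in>V. E x y \<longrightarrow> E (f x) (f y)"
  shows "walk V E (map f p)"
  using assms unfolding walk_def by (auto simp: nth_mem subset_iff)

lemma dist_le_walk:
  assumes "walk V E p" "hd p = x" "last p = y"
  shows "dist_graph V E x y \<le> length p - 1"
proof -
  have "length p = Suc (length p - 1)" using assms(1) by (cases p) (auto simp: walk_def)
  then show ?thesis unfolding dist_graph_def by (intro Least_le) (use assms in blast)
qed

lemma shortest_walk:
  assumes "connected_graph V E" "x \<in> V" "y \<in> V"
  obtains p where "walk V E p" "hd p = x" "last p = y" "length p = Suc (dist_graph V E x y)"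
proof -
  obtain p where p: "walk V E p" "hd p = x" "last p = y"
    using assms unfolding connected_graph_def by blast
  have "length p = Suc (length p - 1)" using p(1) by (cases p) (auto simp: walk_def)
  with p have "\<exists>n p. walk V E p \<and> hd p = x \<and> last p = y \<and> length p = Suc n" by blast
  from LeastI_ex[OF this] show ?thesis using that unfolding dist_graph_def by blast
qed

lemma dist_self: "x \<in> V \<Longrightarrow> dist_graph V E x x = 0"
  using dist_le_walk[of V E "[x]" x x] by (simp add: walk_single)

lemma dist_triangle:
  assumes "connected_graph V E" "x \<in> V" "y \<in> V" "z \<in> V"
  shows "dist_graph V E x z \<le> dist_graph V E x y + dist_graph V E y z"
proof -
  obtain p where p: "walk V E p" "hd p = x" "last p = y" "length p = Suc (dist_graph V E x y)"
    using shortest_walk[OF assms(1,2,3)] .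
  obtain q where q: "walk V E q" "hd q = y" "last q = z" "length q = Suc (dist_graph V E y z)"
    using shortest_walk[OF assms(1,3,4)] .
  have ne: "p \<noteq> []" "q \<noteq> []" using p(1) q(1) by (auto simp: walk_def)
  have "walk V E (p @ tl q)" using walk_append[OF p(1) q(1)] p q by simp
  moreover have "hd (p @ tl q) = x" using ne p by simp
  moreover have "last (p @ tl q) = z"
    using ne q p by (cases q; cases "tl q") auto
  ultimately have "dist_graph V E x z \<le> length (p @ tl q) - 1" by (rule dist_le_walk)
  then show ?thesis using p q by simp
qed

lemma dist_sym_le:
  assumes "simple_graph V E" "connected_graph V E" "x \<in> V" "y \<in> V"
  shows "dist_graph V E y x \<le> dist_graph V E x y"
proof -
  obtain p where p: "walk V E p" "hd p = x" "last p = y" "length p = Suc (dist_graph V E x y)"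
    using shortest_walk[OF assms(2,3,4)] .
  have "walk V E (rev p)"
    using walk_rev[OF p(1)] assms(1) unfolding simple_graph_def by blast
  moreover have "hd (rev p) = y" "last (rev p) = x"
    using p by (auto simp: hd_rev last_rev walk_def)
  ultimately show ?thesis using dist_le_walk p(4) by fastforce
qed

lemma dist_sym:
  assumes "simple_graph V E" "connected_graph V E" "x \<in> V" "y \<in> V"
  shows "dist_graph V E x y = dist_graph V E y x"
  using dist_sym_le[OF assms] dist_sym_le[OF assms(1,2,4,3)] by simp

text \<open>Automorphisms map shortest walks to walks, so they do not increase distances.\<close>
lemma dist_automorphism_le:
  assumes "connected_graph V E" "graph_automorphism V E f" "x \<in> V" "y \<in> V"
  shows "dist_graph V E (f x) (f y) \<le> dist_graph V E x y"
proof -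
  obtain p where p: "walk V E p" "hd p = x" "last p = y" "length p = Suc (dist_graph V E x y)"
    using shortest_walk[OF assms(1,3,4)] .
  have "walk V E (map f p)"
    using assms(2) by (intro walk_map[OF p(1)]) (auto simp: graph_automorphism_def bij_betw_def)
  moreover have "hd (map f p) = f x" "last (map f p) = f y"
    using p by (auto simp: hd_map last_map walk_def)
  ultimately show ?thesis using dist_le_walk p(4) by fastforce
qed

lemma distances_finite:
  assumes "finite V"
  shows "finite {dist_graph V E x y | x y. x \<in> V \<and> y \<in> V}"
proof -
  have "{dist_graph V E x y | x y. x \<in> V \<and> y \<in> V} = (\<lambda>(x, y). dist_graph V E x y) ` (V \<times> V)"
    by auto
  then show ?thesis using assms by simp
qed

lemma dist_le_diameter:
  "finite V \<Longrightarrow> x \<in> V \<Longrightarrow> y \<in> V \<Longrightarrow> dist_graph V E x y \<le> diameter V E"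
  unfolding diameter_def by (rule Max_ge[OF distances_finite]) blast+

lemma diameter_attained:
  assumes "finite V" "V \<noteq> {}"
  obtains u v where "u \<in> V" "v \<in> V" "dist_graph V E u v = diameter V E"
proof -
  have "diameter V E \<in> {dist_graph V E x y | x y. x \<in> V \<and> y \<in> V}"
    unfolding diameter_def
    by (rule Max_in[OF distances_finite[OF assms(1)]]) (use assms(2) in blast)
  then obtain u v where "u \<in> V" "v \<in> V" "diameter V E = dist_graph V E u v" by blast
  then show ?thesis by (intro that) simp_all
qed

definition transmission :: "'a set \<Rightarrow> ('a \<Rightarrow> 'a \<Rightarrow> bool) \<Rightarrow> 'a \<Rightarrow> nat" where
  "transmission V E x = (\<Sum>y\<in>V. dist_graph V E x y)"

definition total_distance :: "'a set \<Rightarrow> ('a \<Rightarrow> 'a \<Rightarrow> bool) \<Rightarrow> nat" where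
  "total_distance V E = (\<Sum>x\<in>V. transmission V E x)"

lemma transmission_off_diagonal:
  assumes "finite V" "x \<in> V"
  shows "(\<Sum>y\<in>V - {x}. dist_graph V E x y) = transmission V E x"
  unfolding transmission_def using sum.remove[OF assms, of "dist_graph V E x"] dist_self[OF assms(2), of E] by simp

lemma transmission_upper:
  assumes "finite V" "x \<in> V"
  shows "transmission V E x \<le> (card V - 1) * diameter V E"
proof -
  have "transmission V E x = (\<Sum>y\<in>V - {x}. dist_graph V E x y)"
    using transmission_off_diagonal[OF assms] by simp
  also have "\<dots> \<le> (\<Sum>y\<in>V - {x}. diameter V E)"
    using dist_le_diameter[OF assms(1)] assms(2) by (intro sum_mono) auto
  also have "\<dots> = (card V - 1) * diameter V E" using assms by simp
  finally show ?thesis .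
qed

text \<open>Every vertex y is at distance at least d(u,v) from u or v combined, so the
  transmissions of two vertices together dominate n d(u,v).\<close>
lemma transmission_pair_lower:
  assumes "simple_graph V E" "connected_graph V E" "u \<in> V" "v \<in> V"
  shows "card V * dist_graph V E u v \<le> transmission V E u + transmission V E v"
proof -
  have "card V * dist_graph V E u v = (\<Sum>y\<in>V. dist_graph V E u v)" by simp
  also have "\<dots> \<le> (\<Sum>y\<in>V. dist_graph V E u y + dist_graph V E v y)"
  proof (rule sum_mono)
    fix y assume y: "y \<in> V"
    have "dist_graph V E u v \<le> dist_graph V E u y + dist_graph V E y v"
      using dist_triangle[OF assms(2,3) y assms(4)] .
    then show "dist_graph V E u v \<le> dist_graph V E u y + dist_graph V E v y"
      using dist_sym[OF assms(1,2) assms(4) y] by simp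
  qed
  also have "\<dots> = transmission V E u + transmission V E v"
    by (simp add: transmission_def sum.distrib)
  finally show ?thesis .
qed

lemma transmission_vertex_transitive:
  assumes "connected_graph V E" "vertex_transitive V E" "a \<in> V" "b \<in> V"
  shows "transmission V E a = transmission V E b"
proof -
  have le: "transmission V E y \<le> transmission V E x" if xy: "x \<in> V" "y \<in> V" for x y
  proof -
    obtain f where f: "graph_automorphism V E f" "f x = y"
      using assms(2) xy unfolding vertex_transitive_def by blast
    have bij: "bij_betw f V V" using f(1) unfolding graph_automorphism_def by blast
    have "transmission V E y = (\<Sum>z\<in>V. dist_graph V E (f x) (f z))"
      unfolding transmission_def f(2)[symmetric]
      using sum.reindex_bij_betw[OF bij, of "dist_graph V E (f x)"] by simp
    also have "\<dots> \<le> transmission V E x"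
      unfolding transmission_def using dist_automorphism_le[OF assms(1) f(1) \<open>x \<in> V\<close>]
      by (intro sum_mono) auto
    finally show ?thesis .
  qed
  show ?thesis using le[OF assms(3,4)] le[OF assms(4,3)] by simp
qed

lemma total_distance_bounds:
  assumes "simple_graph V E" "connected_graph V E" "vertex_transitive V E"
  shows "card V * card V * diameter V E \<le> 2 * total_distance V E"
    and "total_distance V E \<le> card V * (card V - 1) * diameter V E"
proof -
  have fin: "finite V" and ne: "V \<noteq> {}" using assms(1) unfolding simple_graph_def by auto
  obtain u v where uv: "u \<in> V" "v \<in> V" "dist_graph V E u v = diameter V E"
    using diameter_attained[OF fin ne] .
  have tr_const: "transmission V E x = transmission V E u" if "x \<in> V" for x
    using transmission_vertex_transitive[OF assms(2,3) that uv(1)] .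
  have total: "total_distance V E = card V * transmission V E u"
    unfolding total_distance_def using tr_const by simp
  have "card V * diameter V E \<le> 2 * transmission V E u"
    using transmission_pair_lower[OF assms(1,2) uv(1,2)] uv(3) tr_const[OF uv(2)] by simp
  then show "card V * card V * diameter V E \<le> 2 * total_distance V E"
    unfolding total using mult_le_mono2[of _ _ "card V"] by (simp add: mult.assoc mult.left_commute)
  show "total_distance V E \<le> card V * (card V - 1) * diameter V E"
    unfolding total using transmission_upper[OF fin uv(1)] by (simp add: mult.assoc)
qed

lemma average_bounds_arith:
  fixes n :: nat and T D :: real
  assumes "n \<ge> 1" "real n * real n * D \<le> 2 * T" "T \<le> real n * (real n - 1) * D"
  shows "D / 2 \<le> T / (real n)^2 \<and> T / (real n)^2 \<le> (1 - 1 / real n) * D"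
    and "n \<ge> 2 \<longrightarrow> D / 2 * (real n / (real n - 1)) \<le> T / (real n * (real n - 1))
                      \<and> T / (real n * (real n - 1)) \<le> D"
proof -
  have n0: "real n > 0" using assms(1) by simp
  show "D / 2 \<le> T / (real n)^2 \<and> T / (real n)^2 \<le> (1 - 1 / real n) * D"
    using assms(2,3) n0 by (simp add: field_simps power2_eq_square)
  show "n \<ge> 2 \<longrightarrow> D / 2 * (real n / (real n - 1)) \<le> T / (real n * (real n - 1))
                      \<and> T / (real n * (real n - 1)) \<le> D"
  proof
    assume "n \<ge> 2"
    then have n1: "real n - 1 > 0" by simp
    then have pos: "real n * (real n - 1) > 0" using n0 by simp
    have "D / 2 * (real n / (real n - 1)) = (real n * real n * D / 2) / (real n * (real n - 1))"
      using n0 n1 by (simp add: field_simps)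
    also have "\<dots> \<le> T / (real n * (real n - 1))"
      using assms(2) pos by (intro divide_right_mono) auto
    finally have "D / 2 * (real n / (real n - 1)) \<le> T / (real n * (real n - 1))" .
    moreover have "T \<le> D * (real n * (real n - 1))" using assms(3) by (simp add: mult_ac)
    then have "T / (real n * (real n - 1)) \<le> D" by (simp add: pos_divide_le_eq[OF pos])
    ultimately show "D / 2 * (real n / (real n - 1)) \<le> T / (real n * (real n - 1))
                      \<and> T / (real n * (real n - 1)) \<le> D" ..
  qed
qed

theorem theorem1p1:
  fixes V :: "'a set" and E :: "'a \<Rightarrow> 'a \<Rightarrow> bool"
  assumes "simple_graph V E" and "connected_graph V E" and "vertex_transitive V E"
  defines "n \<equiv> card V"
  defines "D \<equiv> real (diameter V E)"
  defines "A \<equiv> (\<Sum>x\<in>V. \<Sum>y\<in>V. real (dist_graph V E x y)) / (real n)^2"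
  defines "Abar \<equiv> (\<Sum>x\<in>V. \<Sum>y\<in>V - {x}. real (dist_graph V E x y)) / (real n * (real n - 1))"
  shows "(D / 2 \<le> A \<and> A \<le> (1 - 1 / real n) * D) \<and>
         (n \<ge> 2 \<longrightarrow> D / 2 * (real n / (real n - 1)) \<le> Abar \<and> Abar \<le> D)"
proof -
  define T where "T = real (total_distance V E)"
  have fin: "finite V" and ne: "V \<noteq> {}" using assms(1) unfolding simple_graph_def by auto
  have n1: "n \<ge> 1" using fin ne unfolding n_def by (simp add: Suc_leI card_gt_0_iff)
  have A_eq: "A = T / (real n)^2"
    unfolding A_def T_def total_distance_def transmission_def by simp
  have Abar_eq: "Abar = T / (real n * (real n - 1))"
    unfolding Abar_def T_def total_distance_def
    using transmission_off_diagonal[OF fin] by (simp flip: of_nat_sum)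
  have "real (n * n * diameter V E) \<le> real (2 * total_distance V E)"
    using total_distance_bounds(1)[OF assms(1-3)] unfolding n_def by (rule of_nat_mono)
  then have lower: "real n * real n * D \<le> 2 * T" unfolding T_def D_def by simp
  have "real (total_distance V E) \<le> real (n * (n - 1) * diameter V E)"
    using total_distance_bounds(2)[OF assms(1-3)] unfolding n_def by (rule of_nat_mono)
  then have upper: "T \<le> real n * (real n - 1) * D"
    unfolding T_def D_def using n1 by (simp add: of_nat_diff)
  show ?thesis
    unfolding A_eq Abar_eq
    by (rule conjI[OF average_bounds_arith[OF n1 lower upper]])
qed

end
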